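(* Let $p,s,t$ be parameters with $p\neq0$, and let $a_n=a_n(p,s,t)$ be defined by $a_0=1$, $a_1=p$ and $a_n=s\,a_{n-1}+t\sum_{k=0}^{n-3}a_{k+1}a_{n-k-2}$ for $n\ge2$. Then the sequence $\left(\frac1p a_{n+1}\right)_{n\ge0}$ has generating function $\mathcal{J}(s,s,s,\ldots;pt,pt,pt,\ldots)$, and its Hankel transform is $\left((pt)^{\binom{n+1}{2}}\right)_{n\ge0}$.
   Context: $\mathcal{J}(\alpha_0,\alpha_1,\ldots;\beta_1,\beta_2,\ldots)$ denotes the power series given by the continued fraction $\cfrac{1}{1-\alpha_0x-\cfrac{\beta_1x^2}{1-\alpha_1x-\cfrac{\beta_2x^2}{1-\alpha_2x-\cdots}}}$. The Hankel transform of a sequence $(b_n)_{n\ge0}$ is the sequence $h_n=\det(b_{i+j})_{0\le i,j\le n}$, $n\ge0$. *)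

theory Defs
  imports "HOL-Computational_Algebra.Formal_Power_Series" "Jordan_Normal_Form.Determinant"
begin

function aseq :: "'a::field \<Rightarrow> 'a \<Rightarrow> 'a \<Rightarrow> nat \<Rightarrow> 'a" where
  "aseq p s t n =
     (if n = 0 then 1
      else if n = 1 then p
      else s * aseq p s t (n - 1) + t * (\<Sum>k\<in>{0..<n-2}. aseq p s t (k + 1) * aseq p s t (n - k - 2)))"
  by auto
termination
  by (relation "measure (\<lambda>(p, s, t, n). n)") auto

text \<open>Truncated J-fraction: jtrunc alpha beta m k is the continued fraction
  1/(1 - alpha_k x - beta_(k+1) x^2/(1 - alpha_(k+1) x - ...)) cut off after m levels
  (the innermost remaining tail replaced by 1).\<close>
fun jtrunc :: "(nat \<Rightarrow> 'a::field) \<Rightarrow> (nat \<Rightarrow> 'a) \<Rightarrow> nat \<Rightarrow> nat \<Rightarrow> 'a fps" where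
  "jtrunc \<alpha> \<beta> 0 k = 1"
| "jtrunc \<alpha> \<beta> (Suc m) k =
     inverse (1 - fps_const (\<alpha> k) * fps_X - fps_const (\<beta> (Suc k)) * fps_X ^ 2 * jtrunc \<alpha> \<beta> m (Suc k))"

definition is_Jfrac :: "(nat \<Rightarrow> 'a::field) \<Rightarrow> (nat \<Rightarrow> 'a) \<Rightarrow> 'a fps \<Rightarrow> bool" where
  "is_Jfrac \<alpha> \<beta> F \<longleftrightarrow> (\<lambda>m. jtrunc \<alpha> \<beta> m 0) \<longlonglongrightarrow> F"

definition hankel :: "(nat \<Rightarrow> 'a::comm_ring_1) \<Rightarrow> nat \<Rightarrow> 'a" where
  "hankel b n = det (mat (Suc n) (Suc n) (\<lambda>(i, j). b (i + j)))"

end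

theory Submission
  imports Defs
begin

(*
  Let B be the generating function of a_(n+1)/p. The recurrence says B = 1 + s x B + pt x^2 B^2,
  i.e. B = 1/(1 - s x - pt x^2 B); unfolding this m times shows that the m-th truncation of the
  J-fraction agrees with B up to x^m. For the Hankel determinants, the Riordan array
  R(i,k) = [x^i] x^k B^(k+1) has the tridiagonal production matrix
  R(i+1,k) = R(i,k-1) + s R(i,k) + pt R(i,k+1), which gives b_(i+j) = sum_k R(i,k) (pt)^k R(j,k).
  This factors the Hankel matrix as L D L^T with L unitriangular and D = diag((pt)^k),
  so its determinant is the product of the (pt)^k.
*)

lemma fps_cutoff_inverse_cong:
  fixes f g :: "'a::field fps"
  assumes "fps_cutoff n f = fps_cutoff n g" and "fps_nth f 0 \<noteq> 0"
  shows "fps_cutoff n (inverse f) = fps_cutoff n (inverse g)"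
proof (cases "n = 0")
  case False
  then have "fps_nth g 0 = fps_nth f 0"
    using assms(1) by (simp add: fps_cutoff_eq_fps_cutoff_iff)
  then show ?thesis
    using assms by (metis fps_cutoff_inverse)
qed simp

lemma fps_X_power_mult_nth_cong:
  fixes f g :: "'a::comm_ring_1 fps"
  assumes "fps_cutoff n f = fps_cutoff n g" and "i < n + k"
  shows "fps_nth (fps_X ^ k * f) i = fps_nth (fps_X ^ k * g) i"
  using assms by (auto simp: fps_X_power_mult_nth fps_cutoff_eq_fps_cutoff_iff)

lemma sum_atLeast0LessThan_eq_choose_two: "(\<Sum>i = 0..<n. i) = n choose 2"
  by (induction n) (auto simp: numeral_2_eq_2)

locale const_jfrac =
  fixes s c :: "'a::field" and B :: "'a fps"
  assumes fixed_point: "B = 1 + fps_const s * fps_X * B + fps_const c * fps_X^2 * B^2"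
begin

lemma nth_0 [simp]: "fps_nth B 0 = 1"
  by (subst fixed_point) (simp add: mult.assoc fps_X_power_mult_nth)

lemma eq_inverse_denominator:
  "B = inverse (1 - fps_const s * fps_X - fps_const c * fps_X^2 * B)"
proof -
  have "(1 - fps_const s * fps_X - fps_const c * fps_X^2 * B) * B
      = B - fps_const s * fps_X * B - fps_const c * fps_X^2 * B^2"
    by (simp add: algebra_simps power2_eq_square)
  also have "\<dots> = 1"
    by (subst (1) fixed_point) simp
  finally show ?thesis
    by (rule fps_inverse_unique[symmetric])
qed

lemma fps_cutoff_jtrunc: "fps_cutoff m (jtrunc (\<lambda>_. s) (\<lambda>_. c) m k) = fps_cutoff m B"
proof (induction m arbitrary: k)
  case (Suc m)
  define D where "D J = 1 - fps_const s * fps_X - fps_const c * fps_X^2 * J" for J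
  let ?J = "jtrunc (\<lambda>_. s) (\<lambda>_. c) m (Suc k)"
  have "fps_nth (fps_X^2 * ?J) i = fps_nth (fps_X^2 * B) i" if "i < Suc m" for i
    by (rule fps_X_power_mult_nth_cong[OF Suc.IH]) (use that in simp)
  then have "fps_cutoff (Suc m) (D ?J) = fps_cutoff (Suc m) (D B)"
    by (simp add: fps_cutoff_eq_fps_cutoff_iff D_def mult.assoc)
  moreover have "fps_nth (D ?J) 0 \<noteq> 0"
    by (simp add: D_def mult.assoc fps_X_power_mult_nth)
  ultimately have "fps_cutoff (Suc m) (inverse (D ?J)) = fps_cutoff (Suc m) (inverse (D B))"
    by (rule fps_cutoff_inverse_cong)
  also have "inverse (D B) = B"
    unfolding D_def by (rule eq_inverse_denominator[symmetric])
  finally show ?case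
    by (simp add: D_def)
qed simp

lemma is_Jfrac: "is_Jfrac (\<lambda>_. s) (\<lambda>_. c) B"
  unfolding is_Jfrac_def
proof (rule tendsto_fpsI)
  fix n
  show "\<forall>\<^sub>F m in sequentially. fps_nth (jtrunc (\<lambda>_. s) (\<lambda>_. c) m 0) n = fps_nth B n"
  proof (rule eventually_sequentiallyI)
    fix m assume "Suc n \<le> m"
    then show "fps_nth (jtrunc (\<lambda>_. s) (\<lambda>_. c) m 0) n = fps_nth B n"
      using fps_cutoff_jtrunc[of m 0] by (auto simp: fps_cutoff_eq_fps_cutoff_iff)
  qed
qed

definition riordan_entry :: "nat \<Rightarrow> nat \<Rightarrow> 'a" where
  "riordan_entry i k = fps_nth (fps_X ^ k * B ^ Suc k) i"

lemma riordan_entry_eq_0: "i < k \<Longrightarrow> riordan_entry i k = 0"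
  by (simp add: riordan_entry_def fps_X_power_mult_nth)

lemma riordan_entry_diag [simp]: "riordan_entry i i = 1"
  by (simp add: riordan_entry_def fps_X_power_mult_nth fps_nth_power_0)

lemma riordan_entry_0 [simp]: "riordan_entry i 0 = fps_nth B i"
  by (simp add: riordan_entry_def)

lemma riordan_entry_Suc:
  "riordan_entry (Suc i) k =
     (if k = 0 then 0 else riordan_entry i (k - 1)) + s * riordan_entry i k + c * riordan_entry i (Suc k)"
proof -
  have "fps_X ^ k * B ^ Suc k = fps_X ^ k * B ^ k * B"
    by (simp add: mult_ac)
  also have "\<dots> = fps_X ^ k * B ^ k * (1 + fps_const s * fps_X * B + fps_const c * fps_X^2 * B^2)"
    using fixed_point by (rule arg_cong)
  also have "\<dots> = fps_X ^ k * B ^ k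
      + fps_const s * (fps_X * (fps_X ^ k * B ^ Suc k))
      + fps_const c * (fps_X * (fps_X ^ Suc k * B ^ Suc (Suc k)))"
    by (simp add: distrib_left power2_eq_square mult_ac)
  finally have expand: "fps_X ^ k * B ^ Suc k = \<dots>" .
  have shifted: "fps_nth (fps_X ^ k * B ^ k) (Suc i) = (if k = 0 then 0 else riordan_entry i (k - 1))"
  proof (cases k)
    case (Suc j)
    then have "fps_X ^ k * B ^ k = fps_X * (fps_X ^ j * B ^ Suc j)"
      by (simp add: mult_ac)
    then show ?thesis
      using Suc by (simp only: riordan_entry_def fps_X_mult_nth) simp
  qed simp
  show ?thesis
    unfolding riordan_entry_def[of "Suc i"]
    by (subst expand, simp only: fps_add_nth fps_mult_left_const_nth fps_X_mult_nth shifted)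
       (simp add: riordan_entry_def)
qed

lemma riordan_sum_truncate:
  "i < N \<Longrightarrow> (\<Sum>k<N. riordan_entry i k * f k) = (\<Sum>k<Suc i. riordan_entry i k * f k)"
  by (rule sum.mono_neutral_right) (auto simp: riordan_entry_eq_0)

lemma riordan_sum_Suc_left:
  "(\<Sum>k<Suc (Suc i). riordan_entry (Suc i) k * riordan_entry j k * c ^ k)
     = (\<Sum>k<Suc i. riordan_entry i k * riordan_entry (Suc j) k * c ^ k)"
proof -
  let ?R = riordan_entry
  define below where "below i k = (if k = 0 then 0 else ?R i (k - 1))" for i k
  have rec: "?R (Suc i) k = below i k + s * ?R i k + c * ?R i (Suc k)" for i k
    unfolding below_def by (rule riordan_entry_Suc)
  (* With the weights c^k the production matrix is symmetric: after re-indexing, the subdiagonal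
     part on each side matches the superdiagonal part on the other. *)
  have "(\<Sum>k<Suc (Suc i). ?R (Suc i) k * ?R j k * c ^ k)
      = (\<Sum>k<Suc (Suc i). below i k * ?R j k * c ^ k)
      + (\<Sum>k<Suc (Suc i). ?R i k * (s * ?R j k * c ^ k))
      + (\<Sum>k<Suc (Suc i). c * ?R i (Suc k) * ?R j k * c ^ k)"
    by (simp add: rec sum.distrib algebra_simps del: sum.lessThan_Suc)
  also have "(\<Sum>k<Suc (Suc i). below i k * ?R j k * c ^ k)
      = (\<Sum>k<Suc i. ?R i k * (c * ?R j (Suc k) * c ^ k))"
    by (subst sum.lessThan_Suc_shift) (simp add: below_def mult_ac del: sum.lessThan_Suc)
  also have "(\<Sum>k<Suc (Suc i). ?R i k * (s * ?R j k * c ^ k))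
      = (\<Sum>k<Suc i. ?R i k * (s * ?R j k * c ^ k))"
    by (rule riordan_sum_truncate) simp
  also have "(\<Sum>k<Suc (Suc i). c * ?R i (Suc k) * ?R j k * c ^ k)
      = (\<Sum>k<Suc (Suc (Suc i)). ?R i k * (below j k * c ^ k))"
    by (subst (2) sum.lessThan_Suc_shift) (simp add: below_def mult_ac del: sum.lessThan_Suc)
  also have "\<dots> = (\<Sum>k<Suc i. ?R i k * (below j k * c ^ k))"
    by (rule riordan_sum_truncate) simp
  also have "(\<Sum>k<Suc i. ?R i k * (c * ?R j (Suc k) * c ^ k))
      + (\<Sum>k<Suc i. ?R i k * (s * ?R j k * c ^ k))
      + (\<Sum>k<Suc i. ?R i k * (below j k * c ^ k))
      = (\<Sum>k<Suc i. ?R i k * ?R (Suc j) k * c ^ k)"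
    by (simp add: rec sum.distrib[symmetric] algebra_simps del: sum.lessThan_Suc)
  finally show ?thesis .
qed

lemma nth_add_eq_riordan_sum:
  "fps_nth B (i + j) = (\<Sum>k<Suc i. riordan_entry i k * riordan_entry j k * c ^ k)"
proof (induction i arbitrary: j)
  case (Suc i)
  then show ?case
    using riordan_sum_Suc_left[of i j] Suc.IH[of "Suc j"] by (simp del: sum.lessThan_Suc)
qed simp

lemma hankel_eq: "hankel (fps_nth B) n = c ^ (Suc n choose 2)"
proof -
  let ?N = "Suc n"
  define L where "L = mat ?N ?N (\<lambda>(i, k). riordan_entry i k * c ^ k)"
  define U where "U = mat ?N ?N (\<lambda>(k, j). riordan_entry j k)"
  have L: "L \<in> carrier_mat ?N ?N" and U: "U \<in> carrier_mat ?N ?N"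
    by (simp_all add: L_def U_def)
  have "mat ?N ?N (\<lambda>(i, j). fps_nth B (i + j)) = L * U"
  proof (rule eq_matI)
    fix i j assume "i < dim_row (L * U)" and "j < dim_col (L * U)"
    then have ij: "i < ?N" "j < ?N"
      by (simp_all add: L_def U_def)
    then have "(L * U) $$ (i, j) = (\<Sum>k<?N. riordan_entry i k * (riordan_entry j k * c ^ k))"
      by (simp add: L_def U_def scalar_prod_def atLeast0LessThan mult_ac del: sum.lessThan_Suc)
    also have "\<dots> = (\<Sum>k<Suc i. riordan_entry i k * (riordan_entry j k * c ^ k))"
      using ij(1) by (rule riordan_sum_truncate)
    also have "\<dots> = fps_nth B (i + j)"
      by (simp add: nth_add_eq_riordan_sum mult.assoc del: sum.lessThan_Suc)
    finally show "mat ?N ?N (\<lambda>(i, j). fps_nth B (i + j)) $$ (i, j) = (L * U) $$ (i, j)"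
      using ij by simp
  qed (simp_all add: L_def U_def)
  moreover have "det L = c ^ (?N choose 2)"
  proof -
    have "det L = (\<Prod>i = 0..<?N. c ^ i)"
      by (subst det_lower_triangular[OF _ L])
         (auto simp: L_def riordan_entry_eq_0 prod_list_diag_prod simp del: prod.atLeast0_lessThan_Suc)
    then show ?thesis
      by (simp only: power_sum[symmetric] sum_atLeast0LessThan_eq_choose_two)
  qed
  moreover have "det U = 1"
    by (subst det_upper_triangular[OF _ U])
       (auto simp: U_def upper_triangular_def riordan_entry_eq_0 prod_list_diag_prod)
  ultimately show ?thesis
    by (simp add: hankel_def det_mult[OF L U])
qed

end

declare aseq.simps [simp del]

lemma aseq_0 [simp]: "aseq p s t 0 = 1"
  by (simp add: aseq.simps)

lemma aseq_1 [simp]: "aseq p s t (Suc 0) = p"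
  by (simp add: aseq.simps)

lemma aseq_Suc_Suc:
  "aseq p s t (Suc (Suc n)) = s * aseq p s t (Suc n) + t * (\<Sum>k<n. aseq p s t (Suc k) * aseq p s t (n - k))"
  by (subst aseq.simps) (simp add: atLeast0LessThan)

lemma aseq_shift_fps_fixed_point:
  fixes p s t :: "'a::field"
  assumes "p \<noteq> 0"
  defines "A \<equiv> Abs_fps (\<lambda>n. aseq p s t (n + 1) / p)"
  shows "A = 1 + fps_const s * fps_X * A + fps_const (p * t) * fps_X^2 * A^2"
proof (rule fps_ext)
  fix n
  have aseq_Suc: "aseq p s t (Suc m) = p * fps_nth A m" for m
    using assms by (simp add: A_def)
  consider "n = 0" | "n = Suc 0" | m where "n = Suc (Suc m)"
    by (cases n; cases "n - 1") auto
  then show "fps_nth A n = fps_nth (1 + fps_const s * fps_X * A + fps_const (p * t) * fps_X^2 * A^2) n"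
  proof cases
    case 1
    then show ?thesis
      using assms by (simp add: A_def)
  next
    case 2
    then show ?thesis
      using assms by (simp add: A_def aseq_Suc_Suc)
  next
    case (3 m)
    have "p * fps_nth A (Suc (Suc m))
        = s * (p * fps_nth A (Suc m)) + t * (\<Sum>k<Suc m. (p * fps_nth A k) * (p * fps_nth A (m - k)))"
      using aseq_Suc_Suc[of p s t "Suc m"] by (simp add: aseq_Suc Suc_diff_le del: sum.lessThan_Suc)
    also have "\<dots> = p * (s * fps_nth A (Suc m) + p * t * fps_nth (A^2) m)"
      by (simp add: power2_eq_square fps_mult_nth atLeast0AtMost lessThan_Suc_atMost[symmetric]
          sum_distrib_left algebra_simps del: sum.lessThan_Suc)
    finally show ?thesis
      using 3 assms by (simp add: mult.assoc fps_X_power_mult_nth)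
  qed
qed

theorem mainTheorem5:
  fixes p s t :: "'a::field"
  assumes "p \<noteq> 0"
  shows "is_Jfrac (\<lambda>_. s) (\<lambda>_. p * t) (Abs_fps (\<lambda>n. aseq p s t (n + 1) / p))
       \<and> (\<forall>n. hankel (\<lambda>n. aseq p s t (n + 1) / p) n = (p * t) ^ (Suc n choose 2))"
proof -
  interpret const_jfrac s "p * t" "Abs_fps (\<lambda>n. aseq p s t (n + 1) / p)"
    using aseq_shift_fps_fixed_point[OF assms] by unfold_locales
  show ?thesis
    using is_Jfrac hankel_eq by (simp add: fps.Abs_fps_inverse)
qed

end
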